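(* Let $K\subset\mathbb{R}^n$ be a proper cone. (i) If $\emptyset\ne\mathcal{M}\subset\pi(K)$, then the convex hull $\operatorname{conv}\mathcal{M}$ contains a $K$-irreducible element if and only if for every nontrivial face $F$ of $K$ there exists $A\in\mathcal{M}$ such that $AF\not\subset F$. (ii) If $\emptyset\ne\mathcal{M}\subset\pi(K)+\Lambda$ is bounded, where $\Lambda=\{\lambda I:\lambda\in\mathbb{R}\}$, then $\operatorname{conv}\mathcal{M}$ contains an irreducible exponentially $K$-nonnegative element (i.e. an element $A$ for which no nontrivial face $F$ of $K$ has $A\,\operatorname{span}F\subset\operatorname{span}F$) if and only if for every nontrivial face $F$ of $K$ there exists $A\in\mathcal{M}$ such that $A\,\operatorname{span}F\not\subset\operatorname{span}F$.
   Context: A proper cone $K\subset\mathbb{R}^n$ is a nonempty set with $rK\subset K$ for all $r>0$ which is convex, pointed ($K\cap(-K)=\{0\}$), closed and has nonempty interior. Write $x\ge_K y$ if $x-y\in K$. A face of $K$ is a cone $F\subseteq K$ such that $x\in F$ and $x\ge_K y\ge_K 0$ imply $y\in F$; the faces $\{0\}$ and $K$ are trivial. $\pi(K)=\{A\in\mathbb{R}^{n\times n}: AK\subset K\}$; $A\in\pi(K)$ is $K$-irreducible if there is no nontrivial face $F$ of $K$ with $AF\subset F$. A matrix $A$ is exponentially $K$-nonnegative if $e^{At}K\subset K$ for all $t\ge0$ (every element of $\pi(K)+\Lambda$ has this property). *)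

theory Defs
  imports "HOL-Analysis.Analysis"
begin

definition proper_cone :: "(real^'n) set \<Rightarrow> bool" where
  "proper_cone K \<longleftrightarrow> K \<noteq> {} \<and> (\<forall>r>0. \<forall>x\<in>K. r *\<^sub>R x \<in> K) \<and> convex K
     \<and> K \<inter> uminus ` K = {0} \<and> closed K \<and> interior K \<noteq> {}"

definition cone_ge :: "(real^'n) set \<Rightarrow> real^'n \<Rightarrow> real^'n \<Rightarrow> bool" where
  "cone_ge K x y \<longleftrightarrow> x - y \<in> K"

definition face_of_cone :: "(real^'n) set \<Rightarrow> (real^'n) set \<Rightarrow> bool" where
  "face_of_cone K F \<longleftrightarrow> F \<noteq> {} \<and> (\<forall>r>0. \<forall>x\<in>F. r *\<^sub>R x \<in> F) \<and> convex F \<and> F \<subseteq> K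
     \<and> (\<forall>x y. x \<in> F \<and> cone_ge K x y \<and> cone_ge K y 0 \<longrightarrow> y \<in> F)"

definition nontrivial_face :: "(real^'n) set \<Rightarrow> (real^'n) set \<Rightarrow> bool" where
  "nontrivial_face K F \<longleftrightarrow> face_of_cone K F \<and> F \<noteq> {0} \<and> F \<noteq> K"

definition pi_cone :: "(real^'n) set \<Rightarrow> (real^'n^'n) set" where
  "pi_cone K = {A. \<forall>x\<in>K. A *v x \<in> K}"

definition K_irreducible :: "(real^'n) set \<Rightarrow> real^'n^'n \<Rightarrow> bool" where
  "K_irreducible K A \<longleftrightarrow> A \<in> pi_cone K \<and>
     \<not> (\<exists>F. nontrivial_face K F \<and> (\<lambda>x. A *v x) ` F \<subseteq> F)"

definition mat_pow :: "real^'n^'n \<Rightarrow> nat \<Rightarrow> real^'n^'n" where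
  "mat_pow A k = ((\<lambda>B. A ** B) ^^ k) (mat 1)"

definition mat_exp :: "real^'n^'n \<Rightarrow> real^'n^'n" where
  "mat_exp A = (\<Sum>k. (1 / fact k) *\<^sub>R mat_pow A k)"

definition exp_K_nonneg :: "(real^'n) set \<Rightarrow> real^'n^'n \<Rightarrow> bool" where
  "exp_K_nonneg K A \<longleftrightarrow> (\<forall>t\<ge>0. \<forall>x\<in>K. mat_exp (t *\<^sub>R A) *v x \<in> K)"

definition Lambda_scalar :: "(real^'n^'n) set" where
  "Lambda_scalar = {l *\<^sub>R mat 1 | l. True}"

end

theory Submission
  imports Defs
begin

(* Necessity in both parts is convexity: if every A in M leaves a face F (resp. its span)
   invariant, so does every element of conv M.

   If no nontrivial face of K is invariant under all
   of M \<subseteq> \<pi>(K), then some finite S \<subseteq> M has a sum leaving no nontrivial face invariant: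
   for each nonzero y \<in> K, induction on the dimension of the face generated by y gives a
   finite S and N with (I + \<Sigma>S)^N y in the interior of K; compactness of K \<inter> sphere 0 1
   makes S and N uniform; and a face invariant under \<Sigma>S would then meet the interior.
   The average of S lies in conv M and proves part (i).  For part (ii) each A \<in> M is split
   as P_A + l_A I; the construction is applied to the P_A, and the average of the A is
   exponentially K-nonnegative because e^(t(P + l I)) = e^(tl) e^(tP). *)

lemma sum_matrix_vector_mult:
  fixes f :: "'a \<Rightarrow> real^'n^'m"
  shows "finite S \<Longrightarrow> sum f S *v x = (\<Sum>i\<in>S. f i *v x)"
  by (induction S rule: finite_induct) (auto simp: matrix_vector_mult_add_rdistrib)

lemma bounded_linear_matrix_apply: "bounded_linear (\<lambda>A::real^'n^'m. A *v x)"
  by (auto intro!: linearI simp: linear_conv_bounded_linear[symmetric]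
      matrix_vector_mult_add_rdistrib scaleR_matrix_vector_assoc)

text \<open>The entrywise l1-norm of a matrix: it dominates the Euclidean norm of \<open>real^'n^'m\<close> and is
  submultiplicative, which bounds the terms of the exponential series.\<close>
definition mat_l1_norm :: "real^'n^'m \<Rightarrow> real" where
  "mat_l1_norm A = (\<Sum>i\<in>UNIV. \<Sum>j\<in>UNIV. \<bar>A$i$j\<bar>)"

lemma mat_l1_norm_nonneg: "mat_l1_norm A \<ge> 0"
  unfolding mat_l1_norm_def by (intro sum_nonneg) auto

lemma norm_le_mat_l1_norm: "norm A \<le> mat_l1_norm A"
proof -
  have "norm A = L2_set (\<lambda>i. norm (A$i)) UNIV" by (simp add: norm_vec_def)
  also have "\<dots> \<le> (\<Sum>i\<in>UNIV. norm (A$i))" by (rule L2_set_le_sum) simp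
  also have "\<dots> \<le> mat_l1_norm A" unfolding mat_l1_norm_def by (intro sum_mono norm_le_l1_cart)
  finally show ?thesis .
qed

lemma mat_l1_norm_mult:
  "mat_l1_norm ((A::real^'n^'m) ** (B::real^'k^'n)) \<le> mat_l1_norm A * mat_l1_norm B"
proof -
  have "mat_l1_norm (A ** B) = (\<Sum>i\<in>UNIV. \<Sum>j\<in>UNIV. \<bar>\<Sum>k\<in>UNIV. A$i$k * B$k$j\<bar>)"
    unfolding mat_l1_norm_def by (simp add: matrix_matrix_mult_def)
  also have "\<dots> \<le> (\<Sum>i\<in>UNIV. \<Sum>j\<in>UNIV. \<Sum>k\<in>UNIV. \<bar>A$i$k\<bar> * \<bar>B$k$j\<bar>)"
    by (intro sum_mono) (auto intro: order_trans[OF sum_abs] simp: abs_mult)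
  also have "\<dots> = (\<Sum>i\<in>UNIV. \<Sum>k\<in>UNIV. \<bar>A$i$k\<bar> * (\<Sum>j\<in>UNIV. \<bar>B$k$j\<bar>))"
    by (simp add: sum.swap[of _ "UNIV::'k set"] sum_distrib_left)
  also have "\<dots> \<le> (\<Sum>i\<in>UNIV. \<Sum>k\<in>UNIV. \<bar>A$i$k\<bar> * mat_l1_norm B)"
    unfolding mat_l1_norm_def
    by (intro sum_mono mult_left_mono member_le_sum) (auto intro: sum_nonneg)
  also have "\<dots> = mat_l1_norm A * mat_l1_norm B"
    unfolding mat_l1_norm_def by (simp add: sum_distrib_right)
  finally show ?thesis .
qed

lemma mat_pow_0 [simp]: "mat_pow A 0 = mat 1"
  unfolding mat_pow_def by simp

lemma mat_pow_Suc: "mat_pow A (Suc k) = A ** mat_pow A k"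
  unfolding mat_pow_def by simp

lemma mat_l1_norm_pow:
  fixes A :: "real^'n^'n"
  shows "mat_l1_norm (mat_pow A k) \<le> mat_l1_norm (mat 1 :: real^'n^'n) * mat_l1_norm A ^ k"
proof (induction k)
  case (Suc k)
  have "mat_l1_norm (mat_pow A (Suc k)) \<le> mat_l1_norm A * mat_l1_norm (mat_pow A k)"
    unfolding mat_pow_Suc by (rule mat_l1_norm_mult)
  also have "\<dots> \<le> mat_l1_norm A * (mat_l1_norm (mat 1 :: real^'n^'n) * mat_l1_norm A ^ k)"
    by (intro mult_left_mono Suc mat_l1_norm_nonneg)
  finally show ?case by (simp add: ac_simps)
qed simp

text \<open>The exponential series converges absolutely, by comparison with the scalar series
  of \<open>exp\<close> at the entrywise l1-norm of the matrix.\<close>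
lemma summable_norm_exp_series:
  fixes A :: "real^'n^'n"
  shows "summable (\<lambda>k. norm ((1 / fact k) *\<^sub>R mat_pow A k))"
proof (rule summable_comparison_test)
  let ?c = "mat_l1_norm (mat 1 :: real^'n^'n)"
  show "summable (\<lambda>k. ?c * (inverse (fact k) * mat_l1_norm A ^ k))"
    by (intro summable_mult summable_exp)
  have "norm ((1 / fact k) *\<^sub>R mat_pow A k) \<le> ?c * (inverse (fact k) * mat_l1_norm A ^ k)" for k
  proof -
    have "norm ((1 / fact k) *\<^sub>R mat_pow A k) = inverse (fact k) * norm (mat_pow A k)"
      by (simp add: divide_inverse)
    also have "\<dots> \<le> inverse (fact k) * (?c * mat_l1_norm A ^ k)"
      by (intro mult_left_mono order_trans[OF norm_le_mat_l1_norm mat_l1_norm_pow]) auto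
    finally show ?thesis by (simp add: ac_simps)
  qed
  then show "\<exists>N. \<forall>k\<ge>N. norm (norm ((1 / fact k) *\<^sub>R mat_pow A k))
                         \<le> ?c * (inverse (fact k) * mat_l1_norm A ^ k)"
    by simp
qed

lemma summable_norm_exp_series_apply:
  fixes A :: "real^'n^'n"
  shows "summable (\<lambda>k. norm ((1 / fact k) *\<^sub>R (mat_pow A k *v x)))"
proof -
  obtain B where B: "\<And>M::real^'n^'n. norm (M *v x) \<le> norm M * B"
    using bounded_linear.bounded[OF bounded_linear_matrix_apply] by blast
  show ?thesis
  proof (rule summable_comparison_test)
    show "summable (\<lambda>k. norm ((1 / fact k) *\<^sub>R mat_pow A k) * B)"
      by (intro summable_mult2 summable_norm_exp_series)
    show "\<exists>N. \<forall>k\<ge>N. norm (norm ((1 / fact k) *\<^sub>R (mat_pow A k *v x)))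
                       \<le> norm ((1 / fact k) *\<^sub>R mat_pow A k) * B"
      using B[of "(1 / fact _) *\<^sub>R mat_pow A _"] by (simp add: scaleR_matrix_vector_assoc)
  qed
qed

lemma mat_exp_apply:
  fixes A :: "real^'n^'n"
  shows "mat_exp A *v x = (\<Sum>k. (1 / fact k) *\<^sub>R (mat_pow A k *v x))"
proof -
  have "summable (\<lambda>k. (1 / fact k) *\<^sub>R mat_pow A k)"
    by (rule summable_norm_cancel[OF summable_norm_exp_series])
  then have "mat_exp A *v x = (\<Sum>k. ((1 / fact k) *\<^sub>R mat_pow A k) *v x)"
    unfolding mat_exp_def by (rule bounded_linear.suminf[OF bounded_linear_matrix_apply])
  then show ?thesis by (simp add: scaleR_matrix_vector_assoc)
qed

text \<open>Binomial expansion of \<open>(\<mu> I + C)\<^sup>k x\<close>; the identity commutes with everything.\<close>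
lemma binomial_expansion_apply:
  fixes C :: "real^'n^'n"
  shows "mat_pow (\<mu> *\<^sub>R mat 1 + C) k *v x
     = (\<Sum>i\<le>k. (real (k choose i) * \<mu>^i) *\<^sub>R (mat_pow C (k - i) *v x))"
proof (induction k)
  case (Suc k)
  define u where "u j = mat_pow C j *v x" for j
  define c where "c k i = real (k choose i)" for k i
  have Cu: "C *v u j = u (Suc j)" for j
    unfolding u_def mat_pow_Suc by (simp add: matrix_vector_mul_assoc)
  define w where "w = mat_pow (\<mu> *\<^sub>R mat 1 + C) k *v x"
  have "mat_pow (\<mu> *\<^sub>R mat 1 + C) (Suc k) *v x = \<mu> *\<^sub>R w + C *v w"
    unfolding w_def mat_pow_Suc
    by (simp add: matrix_vector_mul_assoc[symmetric] matrix_vector_mult_add_rdistrib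
        scaleR_matrix_vector_assoc[symmetric])
  also have "w = (\<Sum>i\<le>k. (c k i * \<mu>^i) *\<^sub>R u (k - i))"
    unfolding w_def Suc u_def c_def ..
  also have "C *v (\<Sum>i\<le>k. (c k i * \<mu>^i) *\<^sub>R u (k - i))
           = (\<Sum>i\<le>Suc k. (c k i * \<mu>^i) *\<^sub>R u (Suc k - i))"
    by (simp add: linear_sum[OF matrix_vector_mul_linear] o_def matrix_scaleR_vector_ac Cu
        Suc_diff_le scaleR_matrix_vector_assoc[symmetric] c_def)
  also have "\<dots> = u (Suc k) + (\<Sum>i\<le>k. (c k (Suc i) * \<mu>^Suc i) *\<^sub>R u (k - i))"
    by (subst sum.atMost_Suc_shift) (simp add: c_def)
  also have "\<mu> *\<^sub>R (\<Sum>i\<le>k. (c k i * \<mu>^i) *\<^sub>R u (k - i))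
           = (\<Sum>i\<le>k. (c k i * \<mu>^Suc i) *\<^sub>R u (k - i))"
    by (simp add: scaleR_sum_right mult_ac)
  also have "(\<Sum>i\<le>k. (c k i * \<mu>^Suc i) *\<^sub>R u (k - i))
               + (u (Suc k) + (\<Sum>i\<le>k. (c k (Suc i) * \<mu>^Suc i) *\<^sub>R u (k - i)))
           = u (Suc k) + (\<Sum>i\<le>k. (c (Suc k) (Suc i) * \<mu>^Suc i) *\<^sub>R u (k - i))"
    by (simp add: c_def sum.distrib[symmetric] scaleR_add_left[symmetric] distrib_right add_ac)
  also have "\<dots> = (\<Sum>i\<le>Suc k. (c (Suc k) i * \<mu>^i) *\<^sub>R u (Suc k - i))"
    by (subst sum.atMost_Suc_shift) (simp add: c_def)
  finally show ?case unfolding u_def c_def .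
qed simp

text \<open>Hence the k-th term of the exponential series of \<open>\<mu> I + C\<close> (applied to \<open>x\<close>) is the
  k-th Cauchy-product term of the series of \<open>exp \<mu>\<close> and of \<open>e\<^sup>C x\<close>.\<close>
lemma exp_series_term_shift:
  fixes C :: "real^'n^'n"
  shows "(1 / fact k) *\<^sub>R (mat_pow (\<mu> *\<^sub>R mat 1 + C) k *v x)
     = (\<Sum>i\<le>k. (\<mu>^i / fact i) *\<^sub>R ((1 / fact (k - i)) *\<^sub>R (mat_pow C (k - i) *v x)))"
proof -
  have "(1 / fact k) * real (k choose i) * \<mu>^i = \<mu>^i / fact i * (1 / fact (k - i))"
    if "i \<le> k" for i
    using binomial_fact[OF that, where 'a=real] by (simp add: field_simps)
  then show ?thesis
    unfolding binomial_expansion_apply scaleR_sum_right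
    by (intro sum.cong) (auto simp: mult.assoc)
qed

text \<open>The Cauchy product is
  taken coordinatewise, since matrices do not form a normed algebra in the library.\<close>
lemma mat_exp_shift:
  fixes C :: "real^'n^'n"
  shows "mat_exp (\<mu> *\<^sub>R mat 1 + C) *v x = exp \<mu> *\<^sub>R (mat_exp C *v x)"
proof -
  define a where "a i = \<mu>^i / fact i" for i
  define b where "b j = (1 / fact j) *\<^sub>R (mat_pow C j *v x)" for j
  have sb: "summable b"
    unfolding b_def by (rule summable_norm_cancel[OF summable_norm_exp_series_apply])
  have snb: "summable (\<lambda>j. norm (b j $ l))" for l
    by (rule summable_comparison_test[OF _ summable_norm_exp_series_apply[of C x]])
      (auto simp: b_def intro!: exI divide_right_mono component_le_norm_cart)
  have sna: "summable (\<lambda>i. norm (a i))"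
    using summable_exp[of "\<bar>\<mu>\<bar>"]
    by (simp add: a_def power_abs divide_inverse abs_mult mult_ac)
  have sD: "summable (\<lambda>k. (1 / fact k) *\<^sub>R (mat_pow (\<mu> *\<^sub>R mat 1 + C) k *v x))"
    by (rule summable_norm_cancel[OF summable_norm_exp_series_apply])
  have "(mat_exp (\<mu> *\<^sub>R mat 1 + C) *v x) $ l = (exp \<mu> *\<^sub>R (mat_exp C *v x)) $ l" for l
  proof -
    have "(mat_exp (\<mu> *\<^sub>R mat 1 + C) *v x) $ l
        = (\<Sum>k. ((1 / fact k) *\<^sub>R (mat_pow (\<mu> *\<^sub>R mat 1 + C) k *v x)) $ l)"
      unfolding mat_exp_apply by (rule bounded_linear.suminf[OF bounded_linear_vec_nth sD])
    also have "\<dots> = (\<Sum>k. \<Sum>i\<le>k. a i * b (k - i) $ l)"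
      unfolding exp_series_term_shift a_def b_def by simp
    also have "\<dots> = (\<Sum>i. a i) * (\<Sum>j. b j $ l)"
      by (rule Cauchy_product[OF sna snb, symmetric])
    also have "(\<Sum>j. b j $ l) = (\<Sum>j. b j) $ l"
      by (rule bounded_linear.suminf[OF bounded_linear_vec_nth sb, symmetric])
    also have "(\<Sum>i. a i) = exp \<mu>"
      unfolding a_def exp_def by (simp add: divide_inverse mult_ac)
    finally show ?thesis
      unfolding mat_exp_apply[of C] b_def by simp
  qed
  then show ?thesis by (simp add: vec_eq_iff)
qed

lemma convex_cone_sum:
  assumes "convex_cone S" "finite I" "\<And>i. i \<in> I \<Longrightarrow> f i \<in> S"
  shows "sum f I \<in> S"
  using assms(2,3)
  by (induction I rule: finite_induct)
    (auto intro: convex_cone_add[OF assms(1)] convex_cone_contains_0[OF assms(1)])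

lemma convex_cone_interior_add:
  fixes S :: "'a::real_normed_vector set"
  assumes "convex_cone S" "z \<in> interior S" "k \<in> S"
  shows "z + k \<in> interior S"
proof -
  have "(+) k ` S \<subseteq> S" using convex_cone_add[OF assms(1) assms(3)] by blast
  then have "interior ((+) k ` S) \<subseteq> interior S" by (rule interior_mono)
  moreover have "k + z \<in> interior ((+) k ` S)"
    using assms(2) unfolding interior_translation by blast
  ultimately show ?thesis by (simp add: add.commute subset_iff)
qed

lemma convex_cone_interior_scale:
  fixes S :: "'a::euclidean_space set"
  assumes "convex_cone S" "z \<in> interior S" "c > 0"
  shows "c *\<^sub>R z \<in> interior S"
proof -
  have "(*\<^sub>R) c ` S \<subseteq> S" using convex_cone_scaleR[OF assms(1)] assms(3) by auto
  then have "interior ((*\<^sub>R) c ` S) \<subseteq> interior S" by (rule interior_mono)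
  moreover have "interior ((*\<^sub>R) c ` S) = (*\<^sub>R) c ` interior S"
    using assms(3) by (intro interior_injective_linear_image) (auto simp: inj_on_def)
  ultimately show ?thesis using assms(2) by blast
qed

lemma interior_absorbing:
  fixes S :: "'a::real_normed_vector set"
  assumes "z \<in> interior S"
  obtains t where "t > 0" "z - t *\<^sub>R y \<in> S"
proof -
  obtain e where e: "e > 0" "ball z e \<subseteq> S" using assms mem_interior by blast
  define t where "t = e / (2 * (norm y + 1))"
  have pos: "2 * (norm y + 1) > 0" by (smt (verit) norm_ge_zero)
  then have t: "t > 0" using e(1) unfolding t_def by simp
  have "t * norm y \<le> t * (norm y + 1)" using t by simp
  also have "\<dots> = e / 2" using pos unfolding t_def by (simp add: field_simps)
  also have "\<dots> < e" using e(1) by simp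
  finally have "z - t *\<^sub>R y \<in> ball z e" using t by (simp add: dist_norm)
  then show ?thesis using that t e(2) by blast
qed

lemma span_convex_cone:
  assumes "convex_cone F" "x \<in> span F"
  obtains a b where "a \<in> F" "b \<in> F" "x = a - b"
proof -
  define D where "D = (\<Union>a\<in>F. \<Union>c\<in>uminus ` F. {a + c})"
  have "convex_cone D"
    unfolding D_def by (intro convex_cone_sums convex_cone_negations assms(1))
  moreover have "- d \<in> D" if "d \<in> D" for d
    using that unfolding D_def by (auto intro!: bexI simp: add.commute)
  ultimately have "subspace D" by (simp add: subspace_convex_cone_symmetric)
  moreover have "F \<subseteq> D"
    unfolding D_def using convex_cone_contains_0[OF assms(1)] by force
  ultimately have "x \<in> D" using assms(2) span_minimal by blast
  then show ?thesis using that unfolding D_def by auto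
qed

text \<open>The map \<open>I + \<Sum>S\<close>, whose iterates drive nonzero vectors of \<open>K\<close> into the interior.\<close>
definition id_plus_sum :: "(real^'n^'n) set \<Rightarrow> real^'n \<Rightarrow> real^'n" where
  "id_plus_sum S v = v + (\<Sum>S) *v v"

lemma bounded_linear_id_plus_sum_iter: "bounded_linear (id_plus_sum S ^^ N)"
proof (induction N)
  case (Suc N)
  have "bounded_linear (id_plus_sum S)"
    unfolding id_plus_sum_def by (intro bounded_linear_add bounded_linear_ident) simp
  from bounded_linear_compose[OF this Suc] show ?case by (simp add: o_def)
qed (simp add: id_def)

lemma invariant_convex_hull:
  fixes X :: "(real^'n) set"
  assumes X: "convex X" and M: "\<forall>B\<in>M. (\<lambda>x. B *v x) ` X \<subseteq> X" and A: "A \<in> convex hull M"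
  shows "(\<lambda>x. A *v x) ` X \<subseteq> X"
proof -
  have "convex {B::real^'n^'n. (\<lambda>x. B *v x) ` X \<subseteq> X}"
    unfolding convex_def
  proof (intro ballI allI impI, clarify)
    fix B1 B2 :: "real^'n^'n" and u v :: real and x
    assume "(\<lambda>x. B1 *v x) ` X \<subseteq> X" "(\<lambda>x. B2 *v x) ` X \<subseteq> X"
      and uv: "0 \<le> u" "0 \<le> v" "u + v = 1" and x: "x \<in> X"
    then have "u *\<^sub>R (B1 *v x) + v *\<^sub>R (B2 *v x) \<in> X" using X unfolding convex_def by blast
    then show "(u *\<^sub>R B1 + v *\<^sub>R B2) *v x \<in> X"
      by (simp add: matrix_vector_mult_add_rdistrib scaleR_matrix_vector_assoc)
  qed
  then have "convex hull M \<subseteq> {B. (\<lambda>x. B *v x) ` X \<subseteq> X}"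
    using M by (intro hull_minimal) auto
  then show ?thesis using A by blast
qed

lemma average_in_convex_hull:
  assumes "finite S" "S \<noteq> {}" "S \<subseteq> M"
  shows "(1 / real (card S)) *\<^sub>R (\<Sum>S) \<in> convex hull M"
proof -
  have "(\<Sum>A\<in>S. (1 / real (card S)) *\<^sub>R A) \<in> convex hull M"
    using assms hull_subset[of M convex] by (intro convex_sum) (auto simp: card_gt_0_iff)
  then show ?thesis by (simp add: scaleR_sum_right)
qed

lemma span_invariant:
  fixes B :: "real^'n^'n"
  assumes "(\<lambda>x. B *v x) ` F \<subseteq> F"
  shows "(\<lambda>x. B *v x) ` span F \<subseteq> span F"
  using span_mono[OF assms] span_linear_image[OF matrix_vector_mul_linear, of B F] by simp

lemma span_invariant_shift:
  fixes P :: "real^'n^'n"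
  shows "(\<lambda>x. (P + l *\<^sub>R mat 1) *v x) ` span F \<subseteq> span F
     \<longleftrightarrow> (\<lambda>x. P *v x) ` span F \<subseteq> span F"
proof -
  have "(P + l *\<^sub>R mat 1) *v x = P *v x + l *\<^sub>R x" for x
    by (simp add: matrix_vector_mult_add_rdistrib scaleR_matrix_vector_assoc[symmetric])
  moreover have "P *v x + l *\<^sub>R x \<in> span F \<longleftrightarrow> P *v x \<in> span F" if "x \<in> span F" for x
    using span_add_eq[OF span_scale[OF that]] by (simp add: add.commute)
  ultimately show ?thesis by auto
qed

lemma pi_cone_Lambda_split:
  assumes "M \<subseteq> {P + L | P L. P \<in> pi_cone K \<and> L \<in> Lambda_scalar}"
  obtains PP ll where "\<And>A. A \<in> M \<Longrightarrow> PP A \<in> pi_cone K \<and> A = PP A + ll A *\<^sub>R mat 1"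
proof -
  have "\<forall>A\<in>M. \<exists>p. fst p \<in> pi_cone K \<and> A = fst p + snd p *\<^sub>R mat 1"
    using assms unfolding Lambda_scalar_def by fastforce
  then obtain g where "\<forall>A\<in>M. fst (g A) \<in> pi_cone K \<and> A = fst (g A) + snd (g A) *\<^sub>R mat 1"
    by (rule bchoice[elim_format]) blast
  then show ?thesis using that[of "\<lambda>A. fst (g A)" "\<lambda>A. snd (g A)"] by blast
qed

context
  fixes K :: "(real^'n) set"
  assumes K: "proper_cone K"
begin

lemma cone_pointed: "x \<in> K \<Longrightarrow> - x \<in> K \<Longrightarrow> x = 0"
proof -
  assume "x \<in> K" "- x \<in> K"
  then have "x \<in> K \<inter> uminus ` K" using image_eqI[of x uminus "- x"] by auto
  then show ?thesis using K unfolding proper_cone_def by blast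
qed

lemma convex_cone_K: "convex_cone K"
proof -
  have "0 \<in> K" using K unfolding proper_cone_def by blast
  then show ?thesis
    using K unfolding proper_cone_def convex_cone_def conic_def
    by (metis less_eq_real_def scaleR_zero_left)
qed

lemmas cone_zero = convex_cone_contains_0[OF convex_cone_K]
  and cone_add = convex_cone_add[OF convex_cone_K]
  and cone_scale = convex_cone_scaleR[OF convex_cone_K]
  and cone_sum = convex_cone_sum[OF convex_cone_K]
  and cone_interior_add = convex_cone_interior_add[OF convex_cone_K]
  and cone_interior_scale = convex_cone_interior_scale[OF convex_cone_K]

text \<open>Pointedness forces the apex to lie on the boundary.\<close>
lemma zero_notin_interior: "0 \<notin> interior K"
proof
  assume int: "0 \<in> interior K"
  obtain t where t: "t > 0" "0 - t *\<^sub>R (1::real^'n) \<in> K"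
    using interior_absorbing[OF int] .
  obtain s where s: "s > 0" "0 - s *\<^sub>R (- 1::real^'n) \<in> K"
    using interior_absorbing[OF int] .
  have "- 1 \<in> K" using cone_scale[OF _ t(2), of "1/t"] t(1) by simp
  moreover have "1 \<in> K" using cone_scale[OF _ s(2), of "1/s"] s(1) by simp
  ultimately have "(1::real^'n) = 0" using cone_pointed by blast
  then show False by simp
qed

lemma face_subset: "face_of_cone K F \<Longrightarrow> F \<subseteq> K"
  unfolding face_of_cone_def by blast

lemma face_hereditary: "face_of_cone K F \<Longrightarrow> x \<in> F \<Longrightarrow> x - y \<in> K \<Longrightarrow> y \<in> K \<Longrightarrow> y \<in> F"
  unfolding face_of_cone_def cone_ge_def by auto

lemma face_convex_cone:
  assumes F: "face_of_cone K F"
  shows "convex_cone F"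
proof -
  obtain a where "a \<in> F" using F unfolding face_of_cone_def by blast
  then have "0 \<in> F" using face_hereditary[OF F] face_subset[OF F] cone_zero by auto
  then show ?thesis
    using F unfolding face_of_cone_def convex_cone_def conic_def
    by (metis less_eq_real_def scaleR_zero_left)
qed

lemma face_span:
  assumes F: "face_of_cone K F" and x: "x \<in> K" "x \<in> span F"
  shows "x \<in> F"
proof -
  obtain a b where ab: "a \<in> F" "b \<in> F" "x = a - b"
    using span_convex_cone[OF face_convex_cone[OF F] x(2)] .
  have "a - x \<in> K" using ab face_subset[OF F] by auto
  then show ?thesis using face_hereditary[OF F ab(1) _ x(1)] by blast
qed

lemma face_interior:
  assumes F: "face_of_cone K F" and z: "z \<in> F" "z \<in> interior K"
  shows "F = K"
proof
  show "F \<subseteq> K" using face_subset[OF F] .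
  show "K \<subseteq> F"
  proof
    fix y assume y: "y \<in> K"
    obtain t where t: "t > 0" "z - t *\<^sub>R y \<in> K" using interior_absorbing[OF z(2)] .
    have "t *\<^sub>R y \<in> F" using face_hereditary[OF F z(1)] t cone_scale y by simp
    from convex_cone_scaleR[OF face_convex_cone[OF F] _ this, of "1/t"]
    show "y \<in> F" using t(1) by simp
  qed
qed

definition face_gen :: "real^'n \<Rightarrow> (real^'n) set" where
  "face_gen y = {w\<in>K. \<exists>c\<ge>0. c *\<^sub>R y - w \<in> K}"

lemma face_gen_self: "y \<in> K \<Longrightarrow> y \<in> face_gen y"
  unfolding face_gen_def by (auto intro!: exI[of _ 1] cone_zero)

lemma face_gen_face:
  assumes y: "y \<in> K"
  shows "face_of_cone K (face_gen y)"
  unfolding face_of_cone_def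
proof (intro conjI allI impI ballI)
  show "face_gen y \<noteq> {}" using face_gen_self[OF y] by blast
  show "face_gen y \<subseteq> K" unfolding face_gen_def by blast
next
  fix r :: real and x assume r: "r > 0" and "x \<in> face_gen y"
  then obtain c where c: "c \<ge> 0" "c *\<^sub>R y - x \<in> K" "x \<in> K" unfolding face_gen_def by blast
  have "(r * c) *\<^sub>R y - r *\<^sub>R x = r *\<^sub>R (c *\<^sub>R y - x)" by (simp add: scaleR_diff_right)
  then show "r *\<^sub>R x \<in> face_gen y"
    unfolding face_gen_def using c r cone_scale by (auto intro!: exI[of _ "r * c"])
next
  show "convex (face_gen y)" unfolding convex_def
  proof (intro ballI allI impI)
    fix x z and u v :: real
    assume "x \<in> face_gen y" "z \<in> face_gen y" and uv: "0 \<le> u" "0 \<le> v" "u + v = 1"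
    then obtain c d where c: "c \<ge> 0" "c *\<^sub>R y - x \<in> K" "x \<in> K"
      and d: "d \<ge> 0" "d *\<^sub>R y - z \<in> K" "z \<in> K"
      unfolding face_gen_def by blast
    have "(u * c + v * d) *\<^sub>R y - (u *\<^sub>R x + v *\<^sub>R z)
        = u *\<^sub>R (c *\<^sub>R y - x) + v *\<^sub>R (d *\<^sub>R y - z)"
      by (simp add: algebra_simps)
    moreover have "u *\<^sub>R (c *\<^sub>R y - x) + v *\<^sub>R (d *\<^sub>R y - z) \<in> K"
      using c d uv by (intro cone_add cone_scale) auto
    moreover have "u *\<^sub>R x + v *\<^sub>R z \<in> K" using c d uv by (intro cone_add cone_scale) auto
    ultimately show "u *\<^sub>R x + v *\<^sub>R z \<in> face_gen y"
      unfolding face_gen_def using c d uv by (auto intro!: exI[of _ "u * c + v * d"])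
  qed
next
  fix x w assume "x \<in> face_gen y \<and> cone_ge K x w \<and> cone_ge K w 0"
  then have x: "x \<in> face_gen y" and xw: "x - w \<in> K" and w: "w \<in> K"
    unfolding cone_ge_def by auto
  obtain c where c: "c \<ge> 0" "c *\<^sub>R y - x \<in> K" using x unfolding face_gen_def by blast
  have "c *\<^sub>R y - w = (c *\<^sub>R y - x) + (x - w)" by simp
  then have "c *\<^sub>R y - w \<in> K" using c xw cone_add by metis
  then show "w \<in> face_gen y" unfolding face_gen_def using c w by auto
qed

lemma face_gen_eq_interior:
  assumes y: "y \<in> K" and gen: "face_gen y = K"
  shows "y \<in> interior K"
proof -
  obtain z where z: "z \<in> interior K" using K unfolding proper_cone_def by blast
  then have "z \<in> face_gen y" using gen interior_subset by blast
  then obtain c where c: "c \<ge> 0" "c *\<^sub>R y - z \<in> K" unfolding face_gen_def by blast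
  have cy: "c *\<^sub>R y \<in> interior K" using cone_interior_add[OF z c(2)] by simp
  then have "c \<noteq> 0" using zero_notin_interior by auto
  then show ?thesis using cone_interior_scale[OF cy, of "1/c"] c(1) by simp
qed

lemma pi_cone_sum: "finite I \<Longrightarrow> (\<And>i. i \<in> I \<Longrightarrow> f i \<in> pi_cone K) \<Longrightarrow> sum f I \<in> pi_cone K"
  unfolding pi_cone_def by (auto simp: sum_matrix_vector_mult intro!: cone_sum)

lemma pi_cone_scale: "P \<in> pi_cone K \<Longrightarrow> t \<ge> 0 \<Longrightarrow> t *\<^sub>R P \<in> pi_cone K"
  unfolding pi_cone_def by (auto simp: scaleR_matrix_vector_assoc[symmetric] intro: cone_scale)

lemma pi_cone_mat_pow: "P \<in> pi_cone K \<Longrightarrow> x \<in> K \<Longrightarrow> mat_pow P j *v x \<in> K"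
  by (induction j) (auto simp: mat_pow_Suc pi_cone_def matrix_vector_mul_assoc[symmetric])

text \<open>Since \<open>K\<close> is closed, \<open>e\<^sup>P\<close> maps \<open>K\<close> into itself whenever \<open>P\<close> does: all partial sums of
  the exponential series do.\<close>
lemma pi_cone_mat_exp:
  assumes P: "P \<in> pi_cone K" and x: "x \<in> K"
  shows "mat_exp P *v x \<in> K"
proof -
  define b where "b j = (1 / fact j) *\<^sub>R (mat_pow P j *v x)" for j
  have "summable b"
    unfolding b_def by (rule summable_norm_cancel[OF summable_norm_exp_series_apply])
  moreover have "(\<Sum>j<n. b j) \<in> K" for n
    unfolding b_def by (intro cone_sum cone_scale pi_cone_mat_pow[OF P x]) auto
  moreover have "closed K" using K unfolding proper_cone_def by blast
  ultimately have "suminf b \<in> K" by (metis closed_sequentially summable_LIMSEQ)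
  then show ?thesis unfolding mat_exp_apply b_def .
qed

lemma exp_K_nonneg_shift:
  assumes P: "P \<in> pi_cone K"
  shows "exp_K_nonneg K (P + l *\<^sub>R mat 1)"
  unfolding exp_K_nonneg_def
proof (intro allI impI ballI)
  fix t :: real and x assume t: "t \<ge> 0" and x: "x \<in> K"
  have "t *\<^sub>R (P + l *\<^sub>R mat 1) = (t * l) *\<^sub>R mat 1 + t *\<^sub>R P" by (simp add: algebra_simps)
  then show "mat_exp (t *\<^sub>R (P + l *\<^sub>R mat 1)) *v x \<in> K"
    using pi_cone_mat_exp[OF pi_cone_scale[OF P t] x]
    by (simp add: mat_exp_shift cone_scale)
qed

lemma id_plus_sum_iter_cone:
  assumes "finite S" "S \<subseteq> pi_cone K" "v \<in> K"
  shows "(id_plus_sum S ^^ N) v \<in> K"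
  using pi_cone_sum[of S "\<lambda>A. A"] assms(1,2) assms(3)
  by (induction N) (auto simp: id_plus_sum_def pi_cone_def intro: cone_add)

lemma id_plus_sum_iter_interior:
  assumes "finite S" "S \<subseteq> pi_cone K" "v \<in> interior K"
  shows "(id_plus_sum S ^^ N) v \<in> interior K"
proof (induction N)
  case (Suc N)
  have "(\<Sum>S) *v (id_plus_sum S ^^ N) v \<in> K"
    using pi_cone_sum[of S "\<lambda>A. A"] assms(1,2) Suc interior_subset unfolding pi_cone_def by blast
  from cone_interior_add[OF Suc this] show ?case
    by (simp only: funpow.simps o_apply id_plus_sum_def[of S "(id_plus_sum S ^^ N) v"])
qed (use assms(3) in simp)

lemma id_plus_sum_iter_mono:
  assumes S: "finite S" "S \<subseteq> pi_cone K" and T: "T \<subseteq> S" and ab: "a - b \<in> K" "b \<in> K"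
  shows "(id_plus_sum S ^^ N) a - (id_plus_sum T ^^ N) b \<in> K"
proof (induction N)
  case (Suc N)
  define a' where "a' = (id_plus_sum S ^^ N) a"
  define b' where "b' = (id_plus_sum T ^^ N) b"
  have T': "finite T" "T \<subseteq> pi_cone K" using S T finite_subset by auto
  have b': "b' \<in> K" unfolding b'_def by (rule id_plus_sum_iter_cone[OF T' ab(2)])
  have ab': "a' - b' \<in> K" using Suc unfolding a'_def b'_def .
  have a': "a' \<in> K" using cone_add[OF ab' b'] by simp
  have "(\<Sum>S) = (\<Sum>(S - T)) + (\<Sum>T)" using sum.subset_diff[OF T S(1), of "\<lambda>x. x"] by simp
  then have "id_plus_sum S a' - id_plus_sum T b'
      = (a' - b') + ((\<Sum>(S - T)) *v a' + (\<Sum>T) *v (a' - b'))"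
    unfolding id_plus_sum_def by (simp add: algebra_simps)
  moreover have "(\<Sum>(S - T)) \<in> pi_cone K" "(\<Sum>T) \<in> pi_cone K"
    using S T' by (auto intro!: pi_cone_sum)
  ultimately have "id_plus_sum S a' - id_plus_sum T b' \<in> K"
    using a' ab' unfolding pi_cone_def by (auto intro!: cone_add)
  then show ?case unfolding a'_def b'_def by simp
qed (use ab in simp)

lemma face_gen_grows:
  assumes y: "y \<in> K" and A: "A \<in> pi_cone K"
    and w: "w \<in> face_gen y" "A *v w \<notin> face_gen y"
  shows "dim (face_gen y) < dim (face_gen (y + A *v y))"
proof (rule ccontr)
  define z where "z = y + A *v y"
  have AK: "\<And>v. v \<in> K \<Longrightarrow> A *v v \<in> K" using A unfolding pi_cone_def by blast
  have sub: "face_gen y \<subseteq> face_gen z"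
  proof
    fix v assume "v \<in> face_gen y"
    then obtain c where c: "c \<ge> 0" "c *\<^sub>R y - v \<in> K" "v \<in> K" unfolding face_gen_def by blast
    have "c *\<^sub>R z - v = (c *\<^sub>R y - v) + c *\<^sub>R (A *v y)" unfolding z_def by (simp add: algebra_simps)
    then have "c *\<^sub>R z - v \<in> K" using c AK y cone_add cone_scale by metis
    then show "v \<in> face_gen z" unfolding face_gen_def using c by auto
  qed
  have Aw: "A *v w \<in> face_gen z"
  proof -
    obtain c where c: "c \<ge> 0" "c *\<^sub>R y - w \<in> K" "w \<in> K" using w(1) unfolding face_gen_def by blast
    have "c *\<^sub>R z - A *v w = c *\<^sub>R y + A *v (c *\<^sub>R y - w)" unfolding z_def
      by (simp add: algebra_simps matrix_vector_mult_scaleR)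
    then have "c *\<^sub>R z - A *v w \<in> K" using c AK y cone_add cone_scale by metis
    then show ?thesis unfolding face_gen_def using c AK by auto
  qed
  assume "\<not> dim (face_gen y) < dim (face_gen (y + A *v y))"
  then have "span (face_gen y) = span (face_gen z)"
    using subspace_dim_equal[OF subspace_span subspace_span span_mono[OF sub]]
    unfolding z_def by simp
  then have "A *v w \<in> span (face_gen y)" using Aw span_base by blast
  moreover have "A *v w \<in> K" using Aw unfolding face_gen_def by blast
  ultimately have "A *v w \<in> face_gen y" using face_span[OF face_gen_face[OF y]] by blast
  then show False using w(2) by blast
qed

lemma id_plus_sum_iter_enlarge:
  assumes S: "finite S" "S \<subseteq> pi_cone K" and T: "T \<subseteq> S" "n \<le> N"
    and y: "y \<in> K" "(id_plus_sum T ^^ n) y \<in> interior K"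
  shows "(id_plus_sum S ^^ N) y \<in> interior K"
proof -
  have "(id_plus_sum S ^^ n) y - (id_plus_sum T ^^ n) y \<in> K"
    using id_plus_sum_iter_mono[OF S T(1)] y(1) cone_zero by simp
  from cone_interior_add[OF y(2) this]
  have "(id_plus_sum S ^^ n) y \<in> interior K" by simp
  moreover have "(id_plus_sum S ^^ N) y = (id_plus_sum S ^^ (N - n)) ((id_plus_sum S ^^ n) y)"
    using T(2) by (metis funpow_add le_add_diff_inverse2 o_apply)
  ultimately show ?thesis using id_plus_sum_iter_interior[OF S] by metis
qed


text \<open>One step of \<open>I + A + \<Sum>S\<^sub>0\<close> dominates \<open>y + A y\<close>; so if \<open>(I + \<Sum>S\<^sub>0)\<^sup>N\<close> drives \<open>y + A y\<close>
  into the interior, then adding \<open>A\<close> to \<open>S\<^sub>0\<close> and iterating once more drives \<open>y\<close> there.\<close>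
lemma id_plus_sum_iter_insert:
  assumes S0: "finite S0" "S0 \<subseteq> pi_cone K" and A: "A \<in> pi_cone K" and y: "y \<in> K"
    and reach: "(id_plus_sum S0 ^^ N) (y + A *v y) \<in> interior K"
  shows "(id_plus_sum (insert A S0) ^^ Suc N) y \<in> interior K"
proof -
  define S where "S = insert A S0"
  have S: "finite S" "S \<subseteq> pi_cone K" using S0 A unfolding S_def by auto
  have z: "y + A *v y \<in> K" using y A cone_add unfolding pi_cone_def by blast
  have "(\<Sum>S) = A + (\<Sum>(S0 - {A}))" unfolding S_def by (simp add: sum.insert_remove S0(1))
  moreover have "(\<Sum>(S0 - {A})) \<in> pi_cone K" using S0 by (intro pi_cone_sum) auto
  ultimately have "id_plus_sum S y - (y + A *v y) \<in> K"
    using y unfolding id_plus_sum_def pi_cone_def by (simp add: matrix_vector_mult_add_rdistrib)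
  from id_plus_sum_iter_mono[OF S _ this z, of S0]
  have "(id_plus_sum S ^^ N) (id_plus_sum S y) - (id_plus_sum S0 ^^ N) (y + A *v y) \<in> K"
    unfolding S_def by blast
  from cone_interior_add[OF reach this]
  show ?thesis unfolding S_def[symmetric] by (simp add: funpow_Suc_right del: funpow.simps)
qed

lemma reach_interior:
  assumes M: "M \<subseteq> pi_cone K"
    and H: "\<forall>F. nontrivial_face K F \<longrightarrow> (\<exists>A\<in>M. \<not> ((\<lambda>x. A *v x) ` F \<subseteq> F))"
  shows "y \<in> K \<Longrightarrow> y \<noteq> 0 \<Longrightarrow> \<exists>S N. finite S \<and> S \<subseteq> M \<and> (id_plus_sum S ^^ N) y \<in> interior K"
proof (induction "CARD('n) - dim (face_gen y)" arbitrary: y rule: less_induct)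
  case less
  show ?case
  proof (cases "face_gen y = K")
    case True
    then show ?thesis using face_gen_eq_interior[OF less(2)]
      by (intro exI[of _ "{}"] exI[of _ 0]) auto
  next
    case False
    then have "nontrivial_face K (face_gen y)"
      unfolding nontrivial_face_def
      using face_gen_face[OF less(2)] face_gen_self[OF less(2)] less(3) by auto
    then obtain A w where A: "A \<in> M" and w: "w \<in> face_gen y" "A *v w \<notin> face_gen y"
      using H by blast
    define z where "z = y + A *v y"
    have AK: "A \<in> pi_cone K" using A M by blast
    have z: "z \<in> K" unfolding z_def using less(2) AK cone_add unfolding pi_cone_def by blast
    have "z \<noteq> 0"
    proof
      assume "z = 0"
      then have "- y = A *v y" unfolding z_def by (simp add: add_eq_0_iff)
      then have "- y \<in> K" using AK less(2) unfolding pi_cone_def by simp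
      then show False using cone_pointed less(2,3) by blast
    qed
    moreover have "dim (face_gen y) < dim (face_gen z)"
      unfolding z_def using face_gen_grows[OF less(2) AK w] .
    moreover have "dim (face_gen z) \<le> CARD('n)" by (rule dim_subset_UNIV_cart)
    ultimately obtain S0 N0 where S0: "finite S0" "S0 \<subseteq> M" "(id_plus_sum S0 ^^ N0) z \<in> interior K"
      using less(1) z by (meson diff_less_mono2 order_less_le_trans)
    then have "(id_plus_sum (insert A S0) ^^ Suc N0) y \<in> interior K"
      using id_plus_sum_iter_insert[OF S0(1) _ AK less(2)] M unfolding z_def by blast
    moreover have "finite (insert A S0)" "insert A S0 \<subseteq> M" using S0 A by auto
    ultimately show ?thesis by blast
  qed
qed

text \<open>By compactness of \<open>K \<inter> sphere 0 1\<close>, a single finite \<open>S\<close> and a single \<open>N\<close> serve all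
  nonzero \<open>y \<in> K\<close> at once.\<close>
lemma reach_interior_uniform:
  assumes M: "M \<subseteq> pi_cone K" "M \<noteq> {}"
    and H: "\<forall>F. nontrivial_face K F \<longrightarrow> (\<exists>A\<in>M. \<not> ((\<lambda>x. A *v x) ` F \<subseteq> F))"
  obtains S N where "finite S" "S \<noteq> {}" "S \<subseteq> M"
    "\<And>y. y \<in> K \<Longrightarrow> y \<noteq> 0 \<Longrightarrow> (id_plus_sum S ^^ N) y \<in> interior K"
proof -
  define C where "C = K \<inter> sphere 0 1"
  define P where "P = {(S, N :: nat). finite S \<and> S \<subseteq> M}"
  define U where "U p = (id_plus_sum (fst p) ^^ snd p) -` interior K" for p
  have "compact C"
    using K unfolding C_def proper_cone_def by (intro closed_Int_compact compact_sphere) auto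
  moreover have "open (U p)" for p
    unfolding U_def
    by (intro continuous_open_vimage open_interior linear_continuous_at bounded_linear_id_plus_sum_iter)
  moreover have "C \<subseteq> (\<Union>p\<in>P. U p)"
    using reach_interior[OF M(1) H] unfolding C_def P_def U_def by fastforce
  ultimately obtain P' where P': "P' \<subseteq> P" "finite P'" "C \<subseteq> (\<Union>p\<in>P'. U p)"
    by (rule compactE_image)
  obtain A0 where A0: "A0 \<in> M" using M(2) by blast
  define S where "S = insert A0 (\<Union>(fst ` P'))"
  define N where "N = (\<Sum>p\<in>P'. snd p)"
  have S: "finite S" "S \<noteq> {}" "S \<subseteq> M" using P' A0 unfolding S_def P_def by fastforce+
  have "(id_plus_sum S ^^ N) y \<in> interior K" if y: "y \<in> K" "y \<noteq> 0" for y
  proof -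
    define y' where "y' = (1 / norm y) *\<^sub>R y"
    have y': "y' \<in> K" "y' \<in> C" unfolding C_def y'_def using y cone_scale by auto
    then obtain p where p: "p \<in> P'" "(id_plus_sum (fst p) ^^ snd p) y' \<in> interior K"
      using P'(3) unfolding U_def by blast
    have "fst p \<subseteq> S" "snd p \<le> N"
      using p(1) P'(2) unfolding S_def N_def by (auto intro: member_le_sum)
    from id_plus_sum_iter_enlarge[OF S(1) _ this y'(1) p(2)]
    have "(id_plus_sum S ^^ N) y' \<in> interior K" using S(3) M(1) by blast
    moreover have "(id_plus_sum S ^^ N) y' = (1 / norm y) *\<^sub>R (id_plus_sum S ^^ N) y"
      unfolding y'_def
      by (rule linear_scale[OF bounded_linear_id_plus_sum_iter[THEN bounded_linear.linear]])
    ultimately show ?thesis using cone_interior_scale[of _ "norm y"] y(2) by fastforce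
  qed
  with S show ?thesis using that by blast
qed

text \<open>Hence some finite sum of elements of \<open>M\<close> leaves no nontrivial face invariant: an
  invariant face would be invariant under \<open>(I + \<Sum>S)\<^sup>N\<close> and so meet the interior.\<close>
lemma sum_no_invariant_face:
  assumes M: "M \<subseteq> pi_cone K" "M \<noteq> {}"
    and H: "\<forall>F. nontrivial_face K F \<longrightarrow> (\<exists>A\<in>M. \<not> ((\<lambda>x. A *v x) ` F \<subseteq> F))"
  shows "\<exists>S. finite S \<and> S \<noteq> {} \<and> S \<subseteq> M \<and>
           (\<forall>F. nontrivial_face K F \<longrightarrow> \<not> ((\<lambda>x. (\<Sum>S) *v x) ` F \<subseteq> F))"
proof -
  obtain S N where S: "finite S" "S \<noteq> {}" "S \<subseteq> M"
    and reach: "\<And>y. y \<in> K \<Longrightarrow> y \<noteq> 0 \<Longrightarrow> (id_plus_sum S ^^ N) y \<in> interior K"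
    using reach_interior_uniform[OF M H] by blast
  have "\<not> ((\<lambda>x. (\<Sum>S) *v x) ` F \<subseteq> F)" if F: "nontrivial_face K F" for F
  proof
    assume inv: "(\<lambda>x. (\<Sum>S) *v x) ` F \<subseteq> F"
    have fF: "face_of_cone K F" using F unfolding nontrivial_face_def by blast
    obtain x where x: "x \<in> F" "x \<noteq> 0"
      using F convex_cone_contains_0[OF face_convex_cone[OF fF]]
      unfolding nontrivial_face_def by blast
    have "(id_plus_sum S ^^ k) x \<in> F" for k
      using inv convex_cone_add[OF face_convex_cone[OF fF]] x(1)
      by (induction k) (auto simp: id_plus_sum_def)
    moreover have "(id_plus_sum S ^^ N) x \<in> interior K" using reach x face_subset[OF fF] by blast
    ultimately have "F = K" using face_interior[OF fF] by blast
    then show False using F unfolding nontrivial_face_def by blast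
  qed
  with S show ?thesis by blast
qed

lemma irreducible_in_convex_hull_iff:
  assumes M: "M \<noteq> {}" "M \<subseteq> pi_cone K"
  shows "(\<exists>A\<in>convex hull M. K_irreducible K A) \<longleftrightarrow>
         (\<forall>F. nontrivial_face K F \<longrightarrow> (\<exists>A\<in>M. \<not> ((\<lambda>x. A *v x) ` F \<subseteq> F)))"
proof
  assume "\<exists>A\<in>convex hull M. K_irreducible K A"
  then obtain A where A: "A \<in> convex hull M" "K_irreducible K A" by blast
  show "\<forall>F. nontrivial_face K F \<longrightarrow> (\<exists>A\<in>M. \<not> ((\<lambda>x. A *v x) ` F \<subseteq> F))"
  proof (intro allI impI, rule ccontr)
    fix F assume F: "nontrivial_face K F" and "\<not> (\<exists>A\<in>M. \<not> ((\<lambda>x. A *v x) ` F \<subseteq> F))"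
    then have "\<forall>B\<in>M. (\<lambda>x. B *v x) ` F \<subseteq> F" by blast
    moreover have "convex F" using F unfolding nontrivial_face_def face_of_cone_def by blast
    ultimately have "(\<lambda>x. A *v x) ` F \<subseteq> F" using invariant_convex_hull[OF _ _ A(1)] by blast
    then show False using A(2) F unfolding K_irreducible_def by blast
  qed
next
  assume "\<forall>F. nontrivial_face K F \<longrightarrow> (\<exists>A\<in>M. \<not> ((\<lambda>x. A *v x) ` F \<subseteq> F))"
  then obtain S where S: "finite S" "S \<noteq> {}" "S \<subseteq> M"
    and irr: "\<And>F. nontrivial_face K F \<Longrightarrow> \<not> ((\<lambda>x. (\<Sum>S) *v x) ` F \<subseteq> F)"
    using sum_no_invariant_face[OF M(2,1)] by blast
  define c where "c = real (card S)"
  have c: "c > 0" using S unfolding c_def by (simp add: card_gt_0_iff)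
  define A where "A = (1 / c) *\<^sub>R (\<Sum>S)"
  have "A \<in> pi_cone K"
    unfolding A_def using c S M by (intro pi_cone_scale pi_cone_sum) auto
  moreover have "\<not> ((\<lambda>x. A *v x) ` F \<subseteq> F)" if F: "nontrivial_face K F" for F
  proof
    assume inv: "(\<lambda>x. A *v x) ` F \<subseteq> F"
    have fF: "face_of_cone K F" using F unfolding nontrivial_face_def by blast
    have "(\<Sum>S) *v x \<in> F" if x: "x \<in> F" for x
    proof -
      have "(\<Sum>S) *v x = c *\<^sub>R (A *v x)"
        using c unfolding A_def by (simp add: scaleR_matrix_vector_assoc[symmetric])
      then show ?thesis
        using convex_cone_scaleR[OF face_convex_cone[OF fF], of c "A *v x"] inv x c by auto
    qed
    then show False using irr[OF F] by blast
  qed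
  ultimately have "K_irreducible K A" unfolding K_irreducible_def by blast
  moreover have "A \<in> convex hull M" unfolding A_def c_def using average_in_convex_hull[OF S] .
  ultimately show "\<exists>A\<in>convex hull M. K_irreducible K A" by blast
qed

lemma average_exp_irreducible:
  assumes S: "finite S" "S \<noteq> {}"
    and shift: "\<And>A. A \<in> S \<Longrightarrow> PP A \<in> pi_cone K \<and> A = PP A + ll A *\<^sub>R mat 1"
    and irr: "\<And>F. nontrivial_face K F \<Longrightarrow> \<not> ((\<lambda>x. (\<Sum>A\<in>S. PP A) *v x) ` F \<subseteq> F)"
  defines "A \<equiv> (1 / real (card S)) *\<^sub>R (\<Sum>S)"
  shows "exp_K_nonneg K A"
    and "\<And>F. nontrivial_face K F \<Longrightarrow> \<not> ((\<lambda>x. A *v x) ` span F \<subseteq> span F)"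
proof -
  define c where "c = real (card S)"
  have c: "c > 0" using S unfolding c_def by (simp add: card_gt_0_iff)
  define Q where "Q = (\<Sum>A\<in>S. PP A)"
  have Q: "Q \<in> pi_cone K" unfolding Q_def using S(1) shift by (intro pi_cone_sum) auto
  have "(\<Sum>S) = (\<Sum>A\<in>S. PP A + ll A *\<^sub>R mat 1)" using shift by (intro sum.cong) auto
  then have "(\<Sum>S) = Q + (\<Sum>A\<in>S. ll A) *\<^sub>R mat 1"
    unfolding Q_def by (simp add: sum.distrib scaleR_sum_left)
  then have A: "A = (1 / c) *\<^sub>R Q + ((\<Sum>A\<in>S. ll A) / c) *\<^sub>R mat 1"
    unfolding A_def c_def by (simp add: scaleR_add_right)
  show "exp_K_nonneg K A"
    unfolding A using c by (intro exp_K_nonneg_shift pi_cone_scale Q) auto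
  fix F assume F: "nontrivial_face K F"
  then have fF: "face_of_cone K F" unfolding nontrivial_face_def by blast
  show "\<not> ((\<lambda>x. A *v x) ` span F \<subseteq> span F)"
  proof
    assume "(\<lambda>x. A *v x) ` span F \<subseteq> span F"
    then have inv: "(\<lambda>x. ((1 / c) *\<^sub>R Q) *v x) ` span F \<subseteq> span F"
      unfolding A span_invariant_shift .
    have "Q *v x \<in> F" if x: "x \<in> F" for x
    proof (rule face_span[OF fF])
      show "Q *v x \<in> K" using Q x face_subset[OF fF] unfolding pi_cone_def by blast
      have "((1 / c) *\<^sub>R Q) *v x \<in> span F" using inv x span_base by blast
      then have "c *\<^sub>R (((1 / c) *\<^sub>R Q) *v x) \<in> span F" by (rule span_scale)
      then show "Q *v x \<in> span F" using c by (simp add: scaleR_matrix_vector_assoc[symmetric])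
    qed
    then show False using irr[OF F] unfolding Q_def by blast
  qed
qed

text \<open>For sufficiency, split each \<open>A \<in> M\<close> as \<open>P\<^sub>A + l\<^sub>A I\<close>: the
  hypothesis transfers to the family of the \<open>P\<^sub>A\<close>, to which part (i)'s construction applies.\<close>
lemma exp_irreducible_in_convex_hull_iff:
  assumes M: "M \<noteq> {}" "M \<subseteq> {P + L | P L. P \<in> pi_cone K \<and> L \<in> Lambda_scalar}"
  shows "(\<exists>A\<in>convex hull M. exp_K_nonneg K A \<and>
            (\<forall>F. nontrivial_face K F \<longrightarrow> \<not> ((\<lambda>x. A *v x) ` span F \<subseteq> span F))) \<longleftrightarrow>
         (\<forall>F. nontrivial_face K F \<longrightarrow> (\<exists>A\<in>M. \<not> ((\<lambda>x. A *v x) ` span F \<subseteq> span F)))"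
proof
  assume "\<exists>A\<in>convex hull M. exp_K_nonneg K A \<and>
            (\<forall>F. nontrivial_face K F \<longrightarrow> \<not> ((\<lambda>x. A *v x) ` span F \<subseteq> span F))"
  then obtain A where A: "A \<in> convex hull M"
    "\<forall>F. nontrivial_face K F \<longrightarrow> \<not> ((\<lambda>x. A *v x) ` span F \<subseteq> span F)" by blast
  show "\<forall>F. nontrivial_face K F \<longrightarrow> (\<exists>A\<in>M. \<not> ((\<lambda>x. A *v x) ` span F \<subseteq> span F))"
  proof (intro allI impI, rule ccontr)
    fix F assume F: "nontrivial_face K F"
      and "\<not> (\<exists>A\<in>M. \<not> ((\<lambda>x. A *v x) ` span F \<subseteq> span F))"
    then have "\<forall>B\<in>M. (\<lambda>x. B *v x) ` span F \<subseteq> span F" by blast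
    from invariant_convex_hull[OF subspace_imp_convex[OF subspace_span] this A(1)]
    show False using A(2) F by blast
  qed
next
  assume H: "\<forall>F. nontrivial_face K F \<longrightarrow> (\<exists>A\<in>M. \<not> ((\<lambda>x. A *v x) ` span F \<subseteq> span F))"
  obtain PP ll where shift: "\<And>A. A \<in> M \<Longrightarrow> PP A \<in> pi_cone K \<and> A = PP A + ll A *\<^sub>R mat 1"
    using pi_cone_Lambda_split[OF M(2)] by blast
  have H': "\<forall>F. nontrivial_face K F \<longrightarrow> (\<exists>B\<in>PP ` M. \<not> ((\<lambda>x. B *v x) ` F \<subseteq> F))"
  proof (intro allI impI)
    fix F assume "nontrivial_face K F"
    then obtain A where A: "A \<in> M" "\<not> ((\<lambda>x. A *v x) ` span F \<subseteq> span F)" using H by blast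
    have "(\<lambda>x. A *v x) ` span F \<subseteq> span F \<longleftrightarrow> (\<lambda>x. PP A *v x) ` span F \<subseteq> span F"
      using span_invariant_shift[of "PP A" "ll A" F] shift[OF A(1)] by simp
    then have "\<not> ((\<lambda>x. PP A *v x) ` F \<subseteq> F)" using A(2) span_invariant by blast
    then show "\<exists>B\<in>PP ` M. \<not> ((\<lambda>x. B *v x) ` F \<subseteq> F)" using A(1) by blast
  qed
  have "PP ` M \<subseteq> pi_cone K" "PP ` M \<noteq> {}" using shift M(1) by auto
  then obtain S' where S': "finite S'" "S' \<noteq> {}" "S' \<subseteq> PP ` M"
    and irr: "\<And>F. nontrivial_face K F \<Longrightarrow> \<not> ((\<lambda>x. (\<Sum>S') *v x) ` F \<subseteq> F)"
    using sum_no_invariant_face[OF _ _ H'] by blast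
  obtain S where S: "S \<subseteq> M" "inj_on PP S" "S' = PP ` S" using S'(3) subset_image_inj by metis
  have fin: "finite S" "S \<noteq> {}" using S S'(1,2) finite_image_iff by auto
  have "(\<Sum>S') = (\<Sum>A\<in>S. PP A)" unfolding S(3) using sum.reindex[OF S(2), of "\<lambda>x. x"] by simp
  then have irrS: "\<And>F. nontrivial_face K F \<Longrightarrow> \<not> ((\<lambda>x. (\<Sum>A\<in>S. PP A) *v x) ` F \<subseteq> F)"
    using irr by simp
  have shiftS: "\<And>A. A \<in> S \<Longrightarrow> PP A \<in> pi_cone K \<and> A = PP A + ll A *\<^sub>R mat 1"
    using shift S(1) by blast
  note avg = average_exp_irreducible[OF fin shiftS irrS]
  show "\<exists>A\<in>convex hull M. exp_K_nonneg K A \<and>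
          (\<forall>F. nontrivial_face K F \<longrightarrow> \<not> ((\<lambda>x. A *v x) ` span F \<subseteq> span F))"
    using average_in_convex_hull[OF fin S(1)] avg by blast
qed

end

theorem mainTheorem4:
  fixes K :: "(real^'n) set"
  assumes "proper_cone K"
  shows "(\<forall>M. M \<noteq> {} \<and> M \<subseteq> pi_cone K \<longrightarrow>
            ((\<exists>A\<in>convex hull M. K_irreducible K A) \<longleftrightarrow>
             (\<forall>F. nontrivial_face K F \<longrightarrow> (\<exists>A\<in>M. \<not> ((\<lambda>x. A *v x) ` F \<subseteq> F)))))
       \<and> (\<forall>M. M \<noteq> {} \<and> M \<subseteq> {P + L | P L. P \<in> pi_cone K \<and> L \<in> Lambda_scalar} \<and> bounded M \<longrightarrow>
            ((\<exists>A\<in>convex hull M. exp_K_nonneg K A \<and>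
                 (\<forall>F. nontrivial_face K F \<longrightarrow> \<not> ((\<lambda>x. A *v x) ` span F \<subseteq> span F))) \<longleftrightarrow>
             (\<forall>F. nontrivial_face K F \<longrightarrow> (\<exists>A\<in>M. \<not> ((\<lambda>x. A *v x) ` span F \<subseteq> span F)))))"
  by (simp add: irreducible_in_convex_hull_iff[OF assms] exp_irreducible_in_convex_hull_iff[OF assms])

end
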